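(* For every $t=0,1,\dots,T-1$, the functions $\omega_t$ and $\bar\omega_t$ are nondecreasing on $\mathbb R$.
   Context: Model. Fix an integer horizon $T\ge 2$, a discount factor $\alpha\in(0,1]$, and for $t=0,\dots,T-1$: unit ordering costs $c_t\in\mathbb R$, a salvage coefficient $c_T\in\mathbb R$, setup costs $K_t\ge 0$, functions $G_t:\mathbb R\to\mathbb R$, and independent nonnegative random demands $D_0,\dots,D_{T-1}$ with right-continuous distribution functions $F_t$ and finite means; all expectations appearing are assumed finite. Put $C_t(y)=(c_t-\alpha c_{t+1})y+G_t(y)+\alpha c_{t+1}E[D_t]$. Standing assumptions: (i) each $C_t$ is convex with $C_t(y)\to+\infty$ as $|y|\to\infty$; (ii) $K_t\ge \alpha K_{t+1}$ for $t=0,\dots,T-2$; (iii) there are constants $\gamma_t\ge 0$ with $|C_t(x)-C_t(y)|\le\gamma_t|x-y|$ for all $x,y$. Grid construction. Fix $\theta>0$, $z_m=m\theta$, $Z_\theta=\{z_m:m\in\mathbb Z\}$, $f_t(n)=F_t(z_{n+1})-F_t(z_n)$ ($n\ge -1$). $C^m_t=\min\{y: C_t(y)=\min_x C_t(x)\}$; with $z_{n_0}<C^m_t\le z_{n_0+1}$, $S^U_t=\min\{z_m\in Z_\theta: z_m\ge C^m_t,\ C_t(z_m)>C_t(z_{n_0})+K_t\}$. $s_{T-1}$ is a point with $s_{T-1}\le C^m_{T-1}$, $C_{T-1}(s_{T-1})=C_{T-1}(C^m_{T-1})+K_{T-1}$; $\bar I_{T-1}=s_{T-1}$. For $t=T-2,\dots,0$: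 $I_t=\max\{z_m\in Z_\theta: z_m<\min(\bar I_{t+1}-\theta,C^m_t)\}$, $\bar I_t=\max\{z_m\in Z_\theta: z_m\le I_t,\ C_t(z_m)>C_t(I_t)+K_t\}+\theta$. $H_{T-1}=C_{T-1}$, $S_{T-1}=C^m_{T-1}$; $V_t(y)=H_t(S_t)+K_t$ for $y<s_t$, $V_t(y)=H_t(y)$ for $y\ge s_t$. For $t=T-2,\dots,0$: $H_t(y)=C_t(y)+\alpha\sum_{n=-1}^\infty V_{t+1}(y-z_n)f_t(n)$; $S_t=\max\{z_m\in Z_\theta: I_t\le z_m\le S^U_t,\ H_t(z_m)=\min\{H_t(z_n):z_n\in Z_\theta, I_t\le z_n\le S^U_t\}\}$; $s_t=S_t$ if $K_t=0$, else $s_t=\min\{z_m\in Z_\theta:\bar I_t\le z_m\le S_t,\ H_t(z_m)\le H_t(S_t)+K_t\}$. Estimate functions. $\psi_{T-1}(x,y)=\bar\psi_{T-1}(x,y)=\gamma_{T-1}x$; $\varphi_{T-1}(x,y)=\bar\varphi_{T-1}(x,y)=0$ if $y<s_{T-1}$ and $=\gamma_{T-1}x$ if $y\ge s_{T-1}$. For $t=0,\dots,T-2$, with $n$ the integer such that $z_{n-1}\le y-s_{t+1}<z_n$: $\psi_t(x,y)=\gamma_tx$ if $y<s_{t+1}-\theta$, else $\psi_t(x,y)=\gamma_tx+\alpha\sum_{m=-1}^{n-1}\varphi_{t+1}(x,y-z_m)f_t(m)$; $\varphi_t(x,y)=0$ if $y<s_t$, $=\psi_t(y-s_t,y)$ if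 $y\ge s_t$ and $y-x<s_t$, $=\psi_t(x,y)$ if $y\ge s_t$ and $y-x\ge s_t$. Likewise $\bar\psi_t(x,y)=\gamma_tx$ if $y<s_{t+1}-\theta$, else $\bar\psi_t(x,y)=\gamma_tx+\alpha\sum_{m=-1}^{n-1}\bar\varphi_{t+1}(x,y-z_m)f_t(m)$; $\bar\varphi_t(x,y)=0$ if $y<s_t$, $=\bar\psi_t(y-s_t+\theta,y)$ if $y\ge s_t$ and $y-x<s_t$, $=\bar\psi_t(x,y)$ if $y\ge s_t$ and $y-x\ge s_t$. Error-bound functions. $\omega_{T-1}\equiv\bar\omega_{T-1}\equiv 0$, $\eta_{T-1}=0$. For $t=T-2,\dots,0$: $\omega_t(x)=\psi_t(\theta,x)-\gamma_t\theta+\alpha\sum_{n=-1}^\infty\bar\omega_{t+1}(x-z_n)f_t(n)$; $\eta_t=\bar\psi_t(\theta,S^U_t)+\omega_t(S^U_t)$; $\bar\omega_t(x)=\eta_t$ if $x\le S^U_t$ and $\bar\omega_t(x)=\max(\eta_t,\omega_t(x))$ if $x>S^U_t$. *)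

theory Defs
  imports "HOL-Probability.Probability"
begin

text \<open>All objects are defined inside a locale that only fixes
the model data (no assumptions); the standing assumptions are stated
explicitly in the theorem. Time index t ranges over 0..T-1; backward
recursions are implemented by primitive recursion on j = T-1-t.\<close>

locale inv_model =
  fixes T :: nat
    and \<alpha> :: real
    and c :: "nat \<Rightarrow> real"            \<comment> \<open>c t for t = 0..T (c T = salvage coefficient)\<close>
    and K :: "nat \<Rightarrow> real"
    and G :: "nat \<Rightarrow> real \<Rightarrow> real"
    and D :: "nat \<Rightarrow> real measure"    \<comment> \<open>distribution (law) of the demand D_t\<close>
    and \<gamma> :: "nat \<Rightarrow> real"            \<comment> \<open>Lipschitz constants\<close>
    and \<theta> :: real
begin

definition z :: "int \<Rightarrow> real" where "z m = of_int m * \<theta>"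

definition grid :: "real set" where "grid = range z"

definition mean :: "nat \<Rightarrow> real" where "mean t = (\<integral>x. x \<partial>(D t))"

definition Fd :: "nat \<Rightarrow> real \<Rightarrow> real" where "Fd t x = measure (D t) {..x}"

definition fd :: "nat \<Rightarrow> int \<Rightarrow> real" where "fd t n = Fd t (z (n + 1)) - Fd t (z n)"

definition C :: "nat \<Rightarrow> real \<Rightarrow> real" where
  "C t y = (c t - \<alpha> * c (Suc t)) * y + G t y + \<alpha> * c (Suc t) * mean t"

definition Cm :: "nat \<Rightarrow> real" where "Cm t = Inf {y. \<forall>x. C t y \<le> C t x}"

definition n0 :: "nat \<Rightarrow> int" where "n0 t = \<lceil>Cm t / \<theta>\<rceil> - 1"

definition SU :: "nat \<Rightarrow> real" where
  "SU t = Inf {w \<in> grid. w \<ge> Cm t \<and> C t w > C t (z (n0 t)) + K t}"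

definition sT :: real where
  "sT = (SOME s. s \<le> Cm (T - 1) \<and> C (T - 1) s = C (T - 1) (Cm (T - 1)) + K (T - 1))"

definition Ival :: "nat \<Rightarrow> real \<Rightarrow> real" where
  "Ival t b = Sup {w \<in> grid. w < min (b - \<theta>) (Cm t)}"

primrec Ibar_aux :: "nat \<Rightarrow> real" where
  "Ibar_aux 0 = sT"
| "Ibar_aux (Suc j) =
     (let t = T - 2 - j; I = Ival t (Ibar_aux j)
      in Sup {w \<in> grid. w \<le> I \<and> C t w > C t I + K t} + \<theta>)"

definition Ibar :: "nat \<Rightarrow> real" where "Ibar t = Ibar_aux (T - 1 - t)"

definition I :: "nat \<Rightarrow> real" where "I t = Ival t (Ibar (Suc t))"

primrec HSs :: "nat \<Rightarrow> (real \<Rightarrow> real) \<times> real \<times> real" where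
  "HSs 0 = (C (T - 1), Cm (T - 1), sT)"
| "HSs (Suc j) =
     (case HSs j of (H', S', s') \<Rightarrow>
      (let t = T - 2 - j;
           V' = (\<lambda>y. if y < s' then H' S' + K (Suc t) else H' y);
           H = (\<lambda>y. C t y + \<alpha> * (\<Sum>k. V' (y - z (int k - 1)) * fd t (int k - 1)));
           A = {u \<in> grid. I t \<le> u \<and> u \<le> SU t};
           S = Sup {w \<in> A. H w = Inf (H ` A)};
           s = (if K t = 0 then S else Inf {w \<in> grid. Ibar t \<le> w \<and> w \<le> S \<and> H w \<le> H S + K t})
       in (H, S, s)))"

definition H :: "nat \<Rightarrow> real \<Rightarrow> real" where "H t = fst (HSs (T - 1 - t))"
definition S :: "nat \<Rightarrow> real" where "S t = fst (snd (HSs (T - 1 - t)))"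
definition s :: "nat \<Rightarrow> real" where "s t = snd (snd (HSs (T - 1 - t)))"
definition V :: "nat \<Rightarrow> real \<Rightarrow> real" where
  "V t y = (if y < s t then H t (S t) + K t else H t y)"

text \<open>Estimate functions: (psi_t, phi_t) for shift d = 0, (psibar_t, phibar_t) for d = theta.\<close>
primrec psiphi :: "real \<Rightarrow> nat \<Rightarrow> (real \<Rightarrow> real \<Rightarrow> real) \<times> (real \<Rightarrow> real \<Rightarrow> real)" where
  "psiphi d 0 = ((\<lambda>x y. \<gamma> (T - 1) * x),
                 (\<lambda>x y. if y < s (T - 1) then 0 else \<gamma> (T - 1) * x))"
| "psiphi d (Suc j) =
     (let t = T - 2 - j;
          \<phi>' = snd (psiphi d j);
          \<psi> = (\<lambda>x y. if y < s (Suc t) - \<theta> then \<gamma> t * x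
                     else \<gamma> t * x + \<alpha> * (\<Sum>m\<in>{-1..\<lfloor>(y - s (Suc t)) / \<theta>\<rfloor>}.
                                          \<phi>' x (y - z m) * fd t m));
          \<phi> = (\<lambda>x y. if y < s t then 0
                     else if y - x < s t then \<psi> (y - s t + d) y else \<psi> x y)
      in (\<psi>, \<phi>))"

definition psi :: "nat \<Rightarrow> real \<Rightarrow> real \<Rightarrow> real" where "psi t = fst (psiphi 0 (T - 1 - t))"
definition phi :: "nat \<Rightarrow> real \<Rightarrow> real \<Rightarrow> real" where "phi t = snd (psiphi 0 (T - 1 - t))"
definition psibar :: "nat \<Rightarrow> real \<Rightarrow> real \<Rightarrow> real" where "psibar t = fst (psiphi \<theta> (T - 1 - t))"
definition phibar :: "nat \<Rightarrow> real \<Rightarrow> real \<Rightarrow> real" where "phibar t = snd (psiphi \<theta> (T - 1 - t))"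

primrec om :: "nat \<Rightarrow> (real \<Rightarrow> real) \<times> (real \<Rightarrow> real)" where
  "om 0 = ((\<lambda>_. 0), (\<lambda>_. 0))"
| "om (Suc j) =
     (let t = T - 2 - j;
          \<omega>b' = snd (om j);
          \<omega> = (\<lambda>x. psi t \<theta> x - \<gamma> t * \<theta> + \<alpha> * (\<Sum>k. \<omega>b' (x - z (int k - 1)) * fd t (int k - 1)));
          \<eta> = psibar t \<theta> (SU t) + \<omega> (SU t);
          \<omega>b = (\<lambda>x. if x \<le> SU t then \<eta> else max \<eta> (\<omega> x))
      in (\<omega>, \<omega>b))"

definition omega :: "nat \<Rightarrow> real \<Rightarrow> real" where "omega t = fst (om (T - 1 - t))"
definition omegabar :: "nat \<Rightarrow> real \<Rightarrow> real" where "omegabar t = snd (om (T - 1 - t))"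
definition eta :: "nat \<Rightarrow> real" where
  "eta t = (if t = T - 1 then 0 else psibar t \<theta> (SU t) + omega t (SU t))"

end

end

theory Submission
  imports Defs
begin

text \<open>For \<open>x \<ge> 0\<close> the estimate functions \<open>\<psi>\<^sub>t(x, y)\<close> and
\<open>\<phi>\<^sub>t(x, y)\<close> are nonnegative and nondecreasing in both arguments: the grid sum in
\<open>\<psi>\<^sub>t\<close> only gains nonnegative terms as y grows, and above \<open>s\<^sub>t\<close> one has
\<open>\<phi>\<^sub>t(x, y) = \<psi>\<^sub>t(min x (y - s\<^sub>t), y)\<close>. The truncated error bound of period t+1 is
constant on a left half-line, so the expectation of its shifts against the grid
probabilities \<open>f\<^sub>t(n)\<close> is a convergent series of nondecreasing terms. Hence \<open>\<omega>\<^sub>t\<close>,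
a sum of nondecreasing functions, is nondecreasing, and so is its truncation.\<close>

definition nonneg_monotone :: "(real \<Rightarrow> real \<Rightarrow> real) \<Rightarrow> bool" where
  "nonneg_monotone f \<longleftrightarrow>
     (\<forall>x x' y y'. 0 \<le> x \<longrightarrow> x \<le> x' \<longrightarrow> y \<le> y' \<longrightarrow> 0 \<le> f x y \<and> f x y \<le> f x' y')"

lemma nonneg_monotoneD:
  assumes "nonneg_monotone f" "0 \<le> x"
  shows "0 \<le> f x y" and "x \<le> x' \<Longrightarrow> y \<le> y' \<Longrightarrow> f x y \<le> f x' y'"
  using assms unfolding nonneg_monotone_def by blast+

lemma nonneg_monotone_cutoff:
  assumes "nonneg_monotone F"
  shows "nonneg_monotone (\<lambda>x y. if y < b then 0 else if y - x < b then F (y - b) y else F x y)"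
proof -
  have cut: "(if y < b then 0 else if y - x < b then F (y - b) y else F x y)
             = (if y < b then 0 else F (min x (y - b)) y)" for x y
    by (simp add: min_def)
  show ?thesis
    unfolding nonneg_monotone_def cut
  proof (intro allI impI conjI)
    fix x x' y y' :: real
    assume x: "0 \<le> x" "x \<le> x'" and y: "y \<le> y'"
    show "0 \<le> (if y < b then 0 else F (min x (y - b)) y)"
      using x nonneg_monotoneD(1)[OF assms] by simp
    show "(if y < b then 0 else F (min x (y - b)) y) \<le> (if y' < b then 0 else F (min x' (y' - b)) y')"
    proof (cases "y < b")
      case True
      then show ?thesis using x nonneg_monotoneD(1)[OF assms] by simp
    next
      case False
      then have "0 \<le> min x (y - b)" "min x (y - b) \<le> min x' (y' - b)" "\<not> y' < b"
        using x y by auto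
      then show ?thesis using False y by (simp add: nonneg_monotoneD(2)[OF assms])
    qed
  qed
qed

lemma mono_truncate:
  fixes f :: "'a::linorder \<Rightarrow> 'b::linorder"
  assumes "mono f"
  shows "mono (\<lambda>x. if x \<le> b then c else max c (f x))"
proof (rule monoI)
  fix x y :: 'a
  assume "x \<le> y"
  then show "(if x \<le> b then c else max c (f x)) \<le> (if y \<le> b then c else max c (f y))"
    using monoD[OF assms \<open>x \<le> y\<close>] by (auto simp: le_max_iff_disj)
qed

context inv_model
begin

lemma fd_nonneg:
  assumes "real_distribution (D t)" "\<theta> > 0"
  shows "0 \<le> fd t m"
proof -
  interpret real_distribution "D t" by (rule assms(1))
  have "z m \<le> z (m + 1)" using assms(2) by (simp add: z_def algebra_simps)
  then show ?thesis
    by (simp add: fd_def Fd_def finite_measure_mono)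
qed

lemma sum_fd_le_1:
  assumes "prob_space (D t)"
  shows "(\<Sum>k<n. fd t (int k - 1)) \<le> 1"
proof -
  have "(\<Sum>k<n. fd t (int k - 1)) = (\<Sum>k<n. Fd t (z (int (Suc k) - 1)) - Fd t (z (int k - 1)))"
    by (simp add: fd_def)
  also have "\<dots> = Fd t (z (int n - 1)) - Fd t (z (int 0 - 1))"
    by (rule sum_lessThan_telescope)
  also have "\<dots> \<le> 1"
    using prob_space.prob_le_1[OF assms] measure_nonneg[of "D t"] unfolding Fd_def
    by (smt (verit))
  finally show ?thesis .
qed

lemma summable_fd:
  assumes "real_distribution (D t)" "\<theta> > 0"
  shows "summable (\<lambda>k. fd t (int k - 1))"
  by (rule summableI_nonneg_bounded[where x=1])
     (use assms in \<open>auto intro: fd_nonneg sum_fd_le_1 simp: real_distribution_def\<close>)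

lemma summable_grid_shift:
  assumes "real_distribution (D t)" "0 < \<theta>" and w_const: "\<And>x. x \<le> a \<Longrightarrow> w x = w0"
  shows "summable (\<lambda>k. w (x - z (int k - 1)) * fd t (int k - 1))"
proof -
  have "\<forall>\<^sub>F k in sequentially. w (x - z (int k - 1)) * fd t (int k - 1) = w0 * fd t (int k - 1)"
    unfolding eventually_sequentially
  proof (intro exI allI impI)
    fix k assume "nat \<lceil>(x - a) / \<theta>\<rceil> + 1 \<le> k"
    then have "(x - a) / \<theta> \<le> real_of_int (int k - 1)" by linarith
    then have "x - z (int k - 1) \<le> a" using \<open>0 < \<theta>\<close> by (simp add: z_def divide_le_eq)
    then show "w (x - z (int k - 1)) * fd t (int k - 1) = w0 * fd t (int k - 1)"
      using w_const by simp
  qed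
  from summable_cong[OF this] show ?thesis
    using summable_mult[OF summable_fd[OF assms(1,2)], of w0] by simp
qed

lemma mono_grid_shift:
  assumes "real_distribution (D t)" "0 < \<theta>" "\<And>x. x \<le> a \<Longrightarrow> w x = w0" "mono w"
  shows "mono (\<lambda>x. \<Sum>k. w (x - z (int k - 1)) * fd t (int k - 1))"
proof (rule monoI)
  fix x y :: real assume "x \<le> y"
  then show "(\<Sum>k. w (x - z (int k - 1)) * fd t (int k - 1))
           \<le> (\<Sum>k. w (y - z (int k - 1)) * fd t (int k - 1))"
    using assms by (intro suminf_le summable_grid_shift mult_right_mono fd_nonneg monoD[of w]) auto
qed

lemma nonneg_monotone_grid_sum:
  assumes "nonneg_monotone p" "\<And>m. 0 \<le> fd t m" "0 \<le> \<gamma> t" "0 \<le> \<alpha>" "0 < \<theta>"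
  shows "nonneg_monotone
           (\<lambda>x y. \<gamma> t * x + \<alpha> * (\<Sum>m\<in>{-1..\<lfloor>(y - b) / \<theta>\<rfloor>}. p x (y - z m) * fd t m))"
  unfolding nonneg_monotone_def
proof (intro allI impI conjI)
  fix x x' y y' :: real
  assume x: "0 \<le> x" "x \<le> x'" and y: "y \<le> y'"
  note p = nonneg_monotoneD[OF assms(1)]
  show "0 \<le> \<gamma> t * x + \<alpha> * (\<Sum>m\<in>{-1..\<lfloor>(y - b) / \<theta>\<rfloor>}. p x (y - z m) * fd t m)"
    using assms x p by (intro add_nonneg_nonneg mult_nonneg_nonneg sum_nonneg) auto
  have "(\<Sum>m\<in>{-1..\<lfloor>(y - b) / \<theta>\<rfloor>}. p x (y - z m) * fd t m)
      \<le> (\<Sum>m\<in>{-1..\<lfloor>(y - b) / \<theta>\<rfloor>}. p x' (y' - z m) * fd t m)"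
    using x y assms(2) by (intro sum_mono mult_right_mono p) auto
  also have "\<dots> \<le> (\<Sum>m\<in>{-1..\<lfloor>(y' - b) / \<theta>\<rfloor>}. p x' (y' - z m) * fd t m)"
    using x y assms(2,5) nonneg_monotoneD(1)[OF assms(1) order_trans[OF x]]
    by (intro sum_mono2) (auto intro!: floor_mono divide_right_mono)
  finally show "\<gamma> t * x + \<alpha> * (\<Sum>m\<in>{-1..\<lfloor>(y - b) / \<theta>\<rfloor>}. p x (y - z m) * fd t m)
      \<le> \<gamma> t * x' + \<alpha> * (\<Sum>m\<in>{-1..\<lfloor>(y' - b) / \<theta>\<rfloor>}. p x' (y' - z m) * fd t m)"
    using x assms(3,4) by (intro add_mono mult_left_mono) auto
qed

lemma psiphi_nonneg_monotone:
  assumes fd: "\<And>t m. t < T \<Longrightarrow> 0 \<le> fd t m" and \<gamma>: "\<And>t. t < T \<Longrightarrow> 0 \<le> \<gamma> t"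
    and "0 \<le> \<alpha>" "2 \<le> T" "0 < \<theta>"
  shows "nonneg_monotone (fst (psiphi 0 j)) \<and> nonneg_monotone (snd (psiphi 0 j))"
proof (induction j)
  case 0
  have "0 \<le> \<gamma> (T - 1)" using \<gamma> \<open>2 \<le> T\<close> by simp
  then show ?case by (auto simp: nonneg_monotone_def mult_left_mono)
next
  case (Suc j)
  define t where "t = T - 2 - j"
  have t: "t < T" "T - Suc (Suc j) = t" using \<open>2 \<le> T\<close> by (auto simp: t_def)
  define F where "F = (\<lambda>x y. \<gamma> t * x + \<alpha> *
    (\<Sum>m\<in>{-1..\<lfloor>(y - s (Suc t)) / \<theta>\<rfloor>}. snd (psiphi 0 j) x (y - z m) * fd t m))"
  \<comment> \<open>below \<open>s\<^sub>t\<^sub>+\<^sub>1 - \<theta>\<close> the grid sum is empty, so the case split in \<open>\<psi>\<^sub>t\<close> is spurious\<close>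
  have empty: "{-1..\<lfloor>(y - s (Suc t)) / \<theta>\<rfloor>} = {}" if "y < s (Suc t) - \<theta>" for y
  proof -
    have "(y - s (Suc t)) / \<theta> < -1" using that \<open>0 < \<theta>\<close> by (simp add: divide_less_eq)
    then show ?thesis by simp linarith
  qed
  have psi_eq: "fst (psiphi 0 (Suc j)) = F"
    by (intro ext) (simp add: Let_def F_def t empty)
  have phi_eq: "snd (psiphi 0 (Suc j)) =
      (\<lambda>x y. if y < s t then 0 else if y - x < s t then F (y - s t) y else F x y)"
    by (intro ext) (simp add: Let_def F_def t empty)
  have "nonneg_monotone F"
    unfolding F_def using Suc.IH assms t by (intro nonneg_monotone_grid_sum) auto
  then show ?case
    unfolding psi_eq phi_eq by (intro conjI nonneg_monotone_cutoff)
qed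

lemma mono_om:
  assumes D: "\<And>t. t < T \<Longrightarrow> real_distribution (D t)" and \<gamma>: "\<And>t. t < T \<Longrightarrow> 0 \<le> \<gamma> t"
    and "0 \<le> \<alpha>" "2 \<le> T" "0 < \<theta>"
  shows "mono (fst (om j)) \<and> mono (snd (om j)) \<and> (\<exists>a w0. \<forall>x\<le>a. snd (om j) x = w0)"
proof (induction j)
  case 0
  show ?case by (auto simp: mono_def)
next
  case (Suc j)
  define t where "t = T - 2 - j"
  have t: "t < T" "T - Suc (Suc j) = t" using \<open>2 \<le> T\<close> by (auto simp: t_def)
  from Suc.IH obtain a w0 where w_const: "\<And>x. x \<le> a \<Longrightarrow> snd (om j) x = w0"
    and w_mono: "mono (snd (om j))" by blast
  define \<omega> where "\<omega> = (\<lambda>x. psi t \<theta> x - \<gamma> t * \<theta> +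
                          \<alpha> * (\<Sum>k. snd (om j) (x - z (int k - 1)) * fd t (int k - 1)))"
  define \<eta> where "\<eta> = psibar t \<theta> (SU t) + \<omega> (SU t)"
  have fst_om: "fst (om (Suc j)) = \<omega>"
    by (simp add: Let_def \<omega>_def t)
  have snd_om: "snd (om (Suc j)) = (\<lambda>x. if x \<le> SU t then \<eta> else max \<eta> (\<omega> x))"
    unfolding \<eta>_def \<omega>_def by (simp add: Let_def t)
  have fd: "\<And>t m. t < T \<Longrightarrow> 0 \<le> fd t m"
    using fd_nonneg[OF D \<open>0 < \<theta>\<close>] .
  have "nonneg_monotone (psi t)"
    using psiphi_nonneg_monotone[OF fd \<gamma> assms(3-5)] unfolding psi_def by blast
  from nonneg_monotoneD(2)[OF this] \<open>0 < \<theta>\<close>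
  have psi_le: "psi t \<theta> x \<le> psi t \<theta> y" if "x \<le> y" for x y
    using that by simp
  from monoD[OF mono_grid_shift[OF D[OF \<open>t < T\<close>] \<open>0 < \<theta>\<close> w_const w_mono]]
  have series_le: "(\<Sum>k. snd (om j) (x - z (int k - 1)) * fd t (int k - 1))
                 \<le> (\<Sum>k. snd (om j) (y - z (int k - 1)) * fd t (int k - 1))" if "x \<le> y" for x y
    using that by simp
  have "mono \<omega>"
    unfolding \<omega>_def using psi_le series_le \<open>0 \<le> \<alpha>\<close>
    by (intro monoI add_mono diff_right_mono mult_left_mono) auto
  show ?case
  proof (intro conjI exI)
    show "mono (fst (om (Suc j)))"
      using \<open>mono \<omega>\<close> by (simp only: fst_om)
    show "mono (snd (om (Suc j)))"
      unfolding snd_om by (rule mono_truncate[OF \<open>mono \<omega>\<close>])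
    show "\<forall>x\<le>SU t. snd (om (Suc j)) x = \<eta>"
      unfolding snd_om by simp
  qed
qed

end

theorem lemma4p6:
  fixes T :: nat and \<alpha> \<theta> :: real and c K \<gamma> :: "nat \<Rightarrow> real"
    and G :: "nat \<Rightarrow> real \<Rightarrow> real" and D :: "nat \<Rightarrow> real measure"
  assumes "T \<ge> 2" and "0 < \<alpha>" and "\<alpha> \<le> 1" and "\<theta> > 0"
    and "\<And>t. t < T \<Longrightarrow> real_distribution (D t)"
    and "\<And>t. t < T \<Longrightarrow> (AE x in D t. 0 \<le> x)"
    and "\<And>t. t < T \<Longrightarrow> integrable (D t) (\<lambda>x. x)"
    and "\<And>t. t < T \<Longrightarrow> K t \<ge> 0"
    and "\<And>t. t < T \<Longrightarrow> convex_on UNIV (inv_model.C \<alpha> c G D t)"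
    and "\<And>t. t < T \<Longrightarrow> filterlim (inv_model.C \<alpha> c G D t) at_top at_top"
    and "\<And>t. t < T \<Longrightarrow> filterlim (inv_model.C \<alpha> c G D t) at_top at_bot"
    and "\<And>t. t + 1 < T \<Longrightarrow> K t \<ge> \<alpha> * K (Suc t)"
    and "\<And>t. t < T \<Longrightarrow> \<gamma> t \<ge> 0"
    and "\<And>t x y. t < T \<Longrightarrow>
           \<bar>inv_model.C \<alpha> c G D t x - inv_model.C \<alpha> c G D t y\<bar> \<le> \<gamma> t * \<bar>x - y\<bar>"
  shows "\<forall>t < T. mono (inv_model.omega T \<alpha> c K G D \<gamma> \<theta> t)
               \<and> mono (inv_model.omegabar T \<alpha> c K G D \<gamma> \<theta> t)"
  \<comment> \<open>only the signs of \<alpha>, \<theta>, \<gamma> and that each \<open>D t\<close> is a probability law matter here\<close>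
  using inv_model.mono_om[of T D \<gamma> \<alpha> \<theta>] assms(1,2,4,5,13)
  unfolding inv_model.omega_def inv_model.omegabar_def by auto

end
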